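(* Let $p\in(0,1]$, $c_1,c_2\ge0$, $\beta<1$, $\delta_1,\delta_2\in(0,1)$. Define $R=\frac12$, $S=(1-p)\frac12$, and for $i=1,2$: $T_i=p+(1-p)\frac12-c_i$, $Q_i=p^2\frac12\beta+p(1-p)+(1-p)^2\frac12-c_i$. (Grim Trigger) $\frac{R}{1-\delta_i}\ge T_i+\frac{\delta_iQ_i}{1-\delta_i}$ for both $i=1,2$ if and only if \[\delta_1\ge\frac{p-2c_1}{(1-\beta)p^2+p}\quad\text{and}\quad\delta_2\ge\frac{p-2c_2}{(1-\beta)p^2+p}.\] (Tit-for-Tat) $\frac{R}{1-\delta_i}\ge T_i+\delta_iS+\frac{\delta_i^2}{1-\delta_i}R$ for both $i=1,2$ if and only if \[\delta_1\ge\frac{p-2c_1}{p}\quad\text{and}\quad\delta_2\ge\frac{p-2c_2}{p}.\]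
   Context: Model: two content providers in an infinitely repeated game choose each period to cooperate or attack (ranking manipulation). Each attack succeeds with probability $p$; player $i$ pays cost $c_i$ per attack; $\beta$ is the market degradation factor when both attacks succeed; $\delta_i$ is player $i$'s discount factor. $R,T_i,S,Q_i$ are the stage payoffs for mutual cooperation, lone attack, being attacked while cooperating, and mutual attack. Cooperation is sustainable when each player weakly prefers perpetual cooperation to deviating under the trigger strategy (grim trigger: permanent mutual defection after a deviation; Tit-for-Tat: one round of retaliation then cooperation). *)

theory Defs
  imports Complex_Main
begin

definition payR :: real where "payR = 1/2"
definition payS :: "real \<Rightarrow> real" where "payS p = (1 - p) * (1/2)"
definition payT :: "real \<Rightarrow> real \<Rightarrow> real" where
  "payT p c = p + (1 - p) * (1/2) - c"
definition payQ :: "real \<Rightarrow> real \<Rightarrow> real \<Rightarrow> real" where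
  "payQ p \<beta> c = p^2 * (1/2) * \<beta> + p * (1 - p) + (1 - p)^2 * (1/2) - c"

definition grim_ok :: "real \<Rightarrow> real \<Rightarrow> real \<Rightarrow> real \<Rightarrow> bool" where
  "grim_ok p \<beta> c d \<longleftrightarrow> payR / (1 - d) \<ge> payT p c + d * payQ p \<beta> c / (1 - d)"

definition tft_ok :: "real \<Rightarrow> real \<Rightarrow> real \<Rightarrow> bool" where
  "tft_ok p c d \<longleftrightarrow> payR / (1 - d) \<ge> payT p c + d * payS p + d^2 / (1 - d) * payR"

end

theory Submission
  imports Defs
begin

text \<open>Multiplying by \<open>1 - \<delta> > 0\<close>, each sustainability condition says that the one-shot gain
  \<open>T\<^sub>i - R = (p - 2 c\<^sub>i) / 2\<close> of an attack is at most \<open>\<delta>\<^sub>i\<close> times the per-period loss of the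
  punishment: \<open>T\<^sub>i - Q\<^sub>i = ((1 - \<beta>) p\<^sup>2 + p) / 2\<close> under grim trigger and \<open>R - S = p / 2\<close>
  under Tit-for-Tat. Both losses are positive, so dividing by them gives the thresholds.\<close>

lemma grim_trigger_condition_iff:
  fixes R T Q d :: real
  assumes "d < 1"
  shows "R / (1 - d) \<ge> T + d * Q / (1 - d) \<longleftrightarrow> T - R \<le> d * (T - Q)"
proof -
  have "T + d * Q / (1 - d) = ((1 - d) * T + d * Q) / (1 - d)"
    using assms by (simp add: field_simps)
  then have "R / (1 - d) \<ge> T + d * Q / (1 - d) \<longleftrightarrow> R \<ge> (1 - d) * T + d * Q"
    using assms by (simp add: divide_le_cancel)
  also have "\<dots> \<longleftrightarrow> T - R \<le> d * (T - Q)"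
    by (simp add: algebra_simps)
  finally show ?thesis .
qed

lemma tit_for_tat_condition_iff:
  fixes R T S d :: real
  assumes "d < 1"
  shows "R / (1 - d) \<ge> T + d * S + d^2 / (1 - d) * R \<longleftrightarrow> T - R \<le> d * (R - S)"
proof -
  have "R / (1 - d) - d^2 / (1 - d) * R = (1 + d) * (1 - d) * R / (1 - d)"
    by (simp add: diff_divide_distrib algebra_simps power2_eq_square)
  also have "\<dots> = (1 + d) * R"
    using assms by simp
  finally have "R / (1 - d) - d^2 / (1 - d) * R = (1 + d) * R" .
  then show ?thesis
    by (auto simp: algebra_simps)
qed

lemma payT_minus_payR: "payT p c - payR = (p - 2 * c) / 2"
  by (simp add: payT_def payR_def field_simps)

lemma payT_minus_payQ: "payT p c - payQ p \<beta> c = ((1 - \<beta>) * p^2 + p) / 2"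
  by (simp add: payT_def payQ_def field_simps power2_eq_square)

lemma payR_minus_payS: "payR - payS p = p / 2"
  by (simp add: payR_def payS_def field_simps)

lemma grim_ok_iff:
  assumes "0 < p" "\<beta> < 1" "d < 1"
  shows "grim_ok p \<beta> c d \<longleftrightarrow> d \<ge> (p - 2 * c) / ((1 - \<beta>) * p^2 + p)"
proof -
  have "0 < (1 - \<beta>) * p^2 + p"
    using assms by (simp add: add_pos_pos)
  moreover have "grim_ok p \<beta> c d \<longleftrightarrow> p - 2 * c \<le> d * ((1 - \<beta>) * p^2 + p)"
    unfolding grim_ok_def grim_trigger_condition_iff[OF \<open>d < 1\<close>] payT_minus_payR
      payT_minus_payQ times_divide_eq_right
    by (simp only: divide_le_cancel) simp
  ultimately show ?thesis
    by (simp add: pos_divide_le_eq)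
qed

lemma tft_ok_iff:
  assumes "0 < p" "d < 1"
  shows "tft_ok p c d \<longleftrightarrow> d \<ge> (p - 2 * c) / p"
proof -
  have "tft_ok p c d \<longleftrightarrow> p - 2 * c \<le> d * p"
    unfolding tft_ok_def tit_for_tat_condition_iff[OF \<open>d < 1\<close>] payT_minus_payR
      payR_minus_payS times_divide_eq_right
    by (simp only: divide_le_cancel) simp
  with \<open>0 < p\<close> show ?thesis
    by (simp add: pos_divide_le_eq)
qed

theorem theorem8:
  fixes p \<beta> c1 c2 d1 d2 :: real
  assumes "0 < p" "p \<le> 1" "0 \<le> c1" "0 \<le> c2" "\<beta> < 1"
    "0 < d1" "d1 < 1" "0 < d2" "d2 < 1"
  shows "(grim_ok p \<beta> c1 d1 \<and> grim_ok p \<beta> c2 d2 \<longleftrightarrow>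
           d1 \<ge> (p - 2*c1) / ((1 - \<beta>) * p^2 + p) \<and> d2 \<ge> (p - 2*c2) / ((1 - \<beta>) * p^2 + p))
       \<and> (tft_ok p c1 d1 \<and> tft_ok p c2 d2 \<longleftrightarrow>
           d1 \<ge> (p - 2*c1) / p \<and> d2 \<ge> (p - 2*c2) / p)"
  using grim_ok_iff[of p \<beta> d1 c1] grim_ok_iff[of p \<beta> d2 c2]
    tft_ok_iff[of p d1 c1] tft_ok_iff[of p d2 c2] assms
  by blast

end
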